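(* Let $\alpha,\beta,\gamma_1,\gamma_2\in\widehat{\mathbb{F}_q^\times}$ with $\varepsilon\notin\{\alpha,\overline{\beta}\gamma_1\gamma_2\}$. Then for every $x\in\mathbb{F}_q$ and $y\in\mathbb{F}_q^\times$, $$F_4\!\left({\alpha;\beta\atop\gamma_1,\gamma_2};x,y\right)=\frac{g(\overline{\alpha}\beta)g(\alpha\overline{\gamma_2})}{g(\beta)g(\overline{\gamma_2})}\,\overline{\alpha}(y)\,F_4\!\left({\alpha;\alpha\overline{\gamma_2}\atop\gamma_1,\alpha\overline{\beta}};\frac{x}{y},\frac{1}{y}\right).$$
   Context: $\mathbb{F}_q$ is a finite field with $q$ elements. $\widehat{\mathbb{F}_q^\times}$ is the group of multiplicative characters $\mathbb{F}_q^\times\to\overline{\mathbb{Q}}^\times$, $\varepsilon$ the trivial character; every character (including $\varepsilon$) is extended by $0$ at $0$; $\overline{\eta}=\eta^{-1}$; $\delta(\eta)=1$ if $\eta=\varepsilon$, else $0$. $\psi$ is a fixed non-trivial additive character. $g(\eta)=-\sum_{x\in\mathbb{F}_q^\times}\psi(x)\eta(x)$, $g^\circ(\eta)=q^{\delta(\eta)}g(\eta)$, $(\alpha)_\nu=g(\alpha\nu)/g(\alpha)$, $(\alpha)^\circ_\nu=g^\circ(\alpha\nu)/g^\circ(\alpha)$. For $x,y\in\mathbb{F}_q$, $F_4\!\left({\alpha;\beta\atop\gamma_1,\gamma_2};x,y\right)=\frac{1}{(1-q)^2}\sum_{\nu_1,\nu_2\in\widehat{\mathbb{F}_q^\times}}\frac{(\alpha)_{\nu_1\nu_2}(\beta)_{\nu_1\nu_2}}{(\gamma_1)^\circ_{\nu_1}(\gamma_2)^\circ_{\nu_2}(\varepsilon)^\circ_{\nu_1}(\varepsilon)^\circ_{\nu_2}}\nu_1(x)\nu_2(y)$.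 *)

theory Defs
  imports Complex_Main
begin

text \<open>Finite field: a type of class finite and field. Characters take values in complex
  (an algebraically closed field containing an algebraic closure of Q).\<close>

definition mult_chars :: "('a::{finite,field} \<Rightarrow> complex) set" where
  "mult_chars = {\<chi>. \<chi> 0 = 0 \<and> \<chi> 1 = 1 \<and>
      (\<forall>x y. x \<noteq> 0 \<longrightarrow> y \<noteq> 0 \<longrightarrow> \<chi> (x * y) = \<chi> x * \<chi> y)}"

definition triv_char :: "'a::{finite,field} \<Rightarrow> complex" where
  "triv_char = (\<lambda>x. if x = 0 then 0 else 1)"

definition char_mult :: "('a::{finite,field} \<Rightarrow> complex) \<Rightarrow> ('a \<Rightarrow> complex) \<Rightarrow> ('a \<Rightarrow> complex)" where
  "char_mult \<chi> \<eta> = (\<lambda>x. \<chi> x * \<eta> x)"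

definition char_inv :: "('a::{finite,field} \<Rightarrow> complex) \<Rightarrow> ('a \<Rightarrow> complex)" where
  "char_inv \<chi> = (\<lambda>x. inverse (\<chi> x))"

definition add_char :: "('a::{finite,field} \<Rightarrow> complex) \<Rightarrow> bool" where
  "add_char \<psi> \<longleftrightarrow> (\<forall>x y. \<psi> (x + y) = \<psi> x * \<psi> y) \<and> (\<exists>x. \<psi> x \<noteq> 1)"

definition gauss :: "('a::{finite,field} \<Rightarrow> complex) \<Rightarrow> ('a \<Rightarrow> complex) \<Rightarrow> complex" where
  "gauss \<psi> \<eta> = - (\<Sum>x\<in>{x. x \<noteq> 0}. \<psi> x * \<eta> x)"

definition gauss_circ :: "('a::{finite,field} \<Rightarrow> complex) \<Rightarrow> ('a \<Rightarrow> complex) \<Rightarrow> complex" where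
  "gauss_circ \<psi> \<eta> = (if \<eta> = triv_char then of_nat (card (UNIV::'a set)) else 1) * gauss \<psi> \<eta>"

definition poch :: "('a::{finite,field} \<Rightarrow> complex) \<Rightarrow> ('a \<Rightarrow> complex) \<Rightarrow> ('a \<Rightarrow> complex) \<Rightarrow> complex" where
  "poch \<psi> \<alpha> \<nu> = gauss \<psi> (char_mult \<alpha> \<nu>) / gauss \<psi> \<alpha>"

definition poch_circ :: "('a::{finite,field} \<Rightarrow> complex) \<Rightarrow> ('a \<Rightarrow> complex) \<Rightarrow> ('a \<Rightarrow> complex) \<Rightarrow> complex" where
  "poch_circ \<psi> \<alpha> \<nu> = gauss_circ \<psi> (char_mult \<alpha> \<nu>) / gauss_circ \<psi> \<alpha>"

definition F4 :: "('a::{finite,field} \<Rightarrow> complex) \<Rightarrow> ('a \<Rightarrow> complex) \<Rightarrow> ('a \<Rightarrow> complex)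
    \<Rightarrow> ('a \<Rightarrow> complex) \<Rightarrow> ('a \<Rightarrow> complex) \<Rightarrow> 'a \<Rightarrow> 'a \<Rightarrow> complex" where
  "F4 \<psi> \<alpha> \<beta> \<gamma>1 \<gamma>2 x y =
     1 / (1 - of_nat (card (UNIV::'a set)))^2 *
     (\<Sum>\<nu>1\<in>mult_chars. \<Sum>\<nu>2\<in>mult_chars.
        poch \<psi> \<alpha> (char_mult \<nu>1 \<nu>2) * poch \<psi> \<beta> (char_mult \<nu>1 \<nu>2) /
        (poch_circ \<psi> \<gamma>1 \<nu>1 * poch_circ \<psi> \<gamma>2 \<nu>2 *
         poch_circ \<psi> triv_char \<nu>1 * poch_circ \<psi> triv_char \<nu>2) * \<nu>1 x * \<nu>2 y)"

end

theory Submission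
  imports Defs
begin

(* With the normalisation g\<degree>(\<eta>) = q^\<delta>(\<eta>) g(\<eta>), the reflection formula
   g(\<chi>) g\<degree>(\<chi>\<inverse>) = \<chi>(-1) q holds for every multiplicative character \<chi>, trivial or not;
   it gives (\<gamma>)\<degree>_\<nu> = \<nu>(-1) g(\<gamma>\<inverse>) / g((\<gamma>\<nu>)\<inverse>).  Substituting \<mu> = (\<alpha> \<nu>1 \<nu>2)\<inverse> for the
   second summation variable of the right-hand side, the two double sums agree term by term:
   once (\<gamma>2)\<degree>_\<nu>2, (\<epsilon>)\<degree>_\<nu>2 on the left and (\<alpha>\<beta>\<inverse>)\<degree>_\<mu>, (\<epsilon>)\<degree>_\<mu> on the right are rewritten
   by this formula, all factors cancel, using \<chi>(-1)^2 = 1. *)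

lemma mult_chars_zero [simp]: "\<chi> \<in> mult_chars \<Longrightarrow> \<chi> 0 = 0"
  unfolding mult_chars_def by blast

lemma mult_chars_one [simp]: "\<chi> \<in> mult_chars \<Longrightarrow> \<chi> 1 = 1"
  unfolding mult_chars_def by blast

lemma mult_chars_mult:
  "\<chi> \<in> mult_chars \<Longrightarrow> x \<noteq> 0 \<Longrightarrow> y \<noteq> 0 \<Longrightarrow> \<chi> (x * y) = \<chi> x * \<chi> y"
  unfolding mult_chars_def by blast

lemma mult_chars_inverse:
  fixes x :: "'a::{finite,field}"
  assumes "\<chi> \<in> mult_chars" "x \<noteq> 0"
  shows "\<chi> (inverse x) = inverse (\<chi> x)"
proof -
  have "\<chi> x * \<chi> (inverse x) = 1"
    using assms mult_chars_mult[of \<chi> x "inverse x"] by simp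
  then show ?thesis
    by (rule inverse_unique[symmetric])
qed

lemma mult_chars_nonzero:
  fixes x :: "'a::{finite,field}"
  shows "\<chi> \<in> mult_chars \<Longrightarrow> x \<noteq> 0 \<Longrightarrow> \<chi> x \<noteq> 0"
  using mult_chars_inverse[of \<chi> x] mult_chars_mult[of \<chi> x "inverse x"] by auto

lemma mult_chars_divide:
  fixes x y :: "'a::{finite,field}"
  shows "\<chi> \<in> mult_chars \<Longrightarrow> y \<noteq> 0 \<Longrightarrow> \<chi> (x / y) = \<chi> x / \<chi> y"
  by (cases "x = 0") (simp_all add: divide_inverse mult_chars_mult mult_chars_inverse)

lemma mult_chars_minus_one_square:
  "\<chi> \<in> mult_chars \<Longrightarrow> \<chi> (-1 :: 'a::{finite,field}) * \<chi> (-1) = 1"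
  using mult_chars_mult[of \<chi> "-1 :: 'a" "-1"] by simp

lemma mult_chars_eqI:
  assumes "\<chi> \<in> mult_chars" "\<eta> \<in> mult_chars" "\<And>x. x \<noteq> 0 \<Longrightarrow> \<chi> x = \<eta> x"
  shows "\<chi> = \<eta>"
proof
  show "\<chi> x = \<eta> x" for x
    using assms by (cases "x = 0") simp_all
qed

lemma triv_char_in_mult_chars [simp]: "triv_char \<in> mult_chars"
  unfolding mult_chars_def triv_char_def by simp

lemma char_mult_in_mult_chars [simp]:
  "\<chi> \<in> mult_chars \<Longrightarrow> \<eta> \<in> mult_chars \<Longrightarrow> char_mult \<chi> \<eta> \<in> mult_chars"
  unfolding mult_chars_def char_mult_def by simp

lemma char_inv_in_mult_chars [simp]: "\<chi> \<in> mult_chars \<Longrightarrow> char_inv \<chi> \<in> mult_chars"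
  unfolding mult_chars_def char_inv_def by simp

lemma triv_char_apply [simp]: "x \<noteq> 0 \<Longrightarrow> triv_char x = 1"
  by (simp add: triv_char_def)

lemma char_mult_apply [simp]: "char_mult \<chi> \<eta> x = \<chi> x * \<eta> x"
  by (simp add: char_mult_def)

lemma char_inv_apply [simp]: "char_inv \<chi> x = inverse (\<chi> x)"
  by (simp add: char_inv_def)

lemma mult_chars_eq_triv_char_iff:
  assumes "\<chi> \<in> mult_chars"
  shows "\<chi> = triv_char \<longleftrightarrow> (\<forall>x. x \<noteq> 0 \<longrightarrow> \<chi> x = 1)"
  using assms mult_chars_eqI[OF assms triv_char_in_mult_chars] by auto

lemma sum_mult_chars_nontriv:
  fixes \<chi> :: "'a::{finite,field} \<Rightarrow> complex"
  assumes "\<chi> \<in> mult_chars" "\<chi> \<noteq> triv_char"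
  shows "(\<Sum>x\<in>{x. x \<noteq> 0}. \<chi> x) = 0"
proof -
  obtain a where a: "a \<noteq> 0" "\<chi> a \<noteq> 1"
    using assms mult_chars_eq_triv_char_iff by blast
  have "(\<Sum>x\<in>{x. x \<noteq> 0}. \<chi> x) = (\<Sum>x\<in>{x. x \<noteq> 0}. \<chi> (a * x))"
    by (rule sum.reindex_bij_witness[of _ "\<lambda>x. a * x" "\<lambda>x. x / a"]) (use a in auto)
  also have "\<dots> = \<chi> a * (\<Sum>x\<in>{x. x \<noteq> 0}. \<chi> x)"
    using assms(1) a by (simp add: sum_distrib_left mult_chars_mult)
  finally show ?thesis
    using a(2) by (metis mult_cancel_right1)
qed

lemma add_char_add: "add_char \<psi> \<Longrightarrow> \<psi> (x + y) = \<psi> x * \<psi> y"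
  unfolding add_char_def by blast

lemma add_char_zero_cases:
  assumes "add_char \<psi>"
  shows "\<psi> 0 = 1 \<or> \<psi> = (\<lambda>_. 0)"
proof -
  have "\<psi> 0 = \<psi> 0 * \<psi> 0"
    using add_char_add[OF assms, of 0 0] by simp
  then have "\<psi> 0 = 0 \<or> \<psi> 0 = 1"
    by (metis mult_cancel_left1)
  moreover have "\<psi> x = 0" if "\<psi> 0 = 0" for x
    using add_char_add[OF assms, of x 0] that by simp
  ultimately show ?thesis
    by auto
qed

lemma sum_add_char:
  fixes \<psi> :: "'a::{finite,field} \<Rightarrow> complex"
  assumes "add_char \<psi>"
  shows "(\<Sum>x\<in>UNIV. \<psi> x) = 0"
proof -
  obtain a where a: "\<psi> a \<noteq> 1"
    using assms unfolding add_char_def by blast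
  have "(\<Sum>x\<in>UNIV. \<psi> x) = (\<Sum>x\<in>UNIV. \<psi> (a + x))"
    by (rule sum.reindex_bij_witness[of _ "\<lambda>x. a + x" "\<lambda>x. x - a"]) auto
  also have "\<dots> = \<psi> a * (\<Sum>x\<in>UNIV. \<psi> x)"
    by (simp add: add_char_add[OF assms] sum_distrib_left)
  finally show ?thesis
    using a by (metis mult_cancel_right1)
qed

lemma card_nonzero: "card {x::'a::field. x \<noteq> 0} = card (UNIV :: 'a set) - 1"
proof -
  have "{x::'a. x \<noteq> 0} = UNIV - {0}"
    by auto
  then show ?thesis
    by (simp add: card_Diff_subset)
qed

lemma sum_add_char_nonzero_scaled:
  fixes \<psi> :: "'a::{finite,field} \<Rightarrow> complex"
  assumes "add_char \<psi>" "\<psi> 0 = 1"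
  shows "(\<Sum>y\<in>{y. y \<noteq> 0}. \<psi> (c * y)) = (if c = 0 then of_nat (card (UNIV :: 'a set)) - 1 else -1)"
proof (cases "c = 0")
  case True
  have "card (UNIV :: 'a set) \<ge> 1"
    by (simp add: Suc_le_eq finite_UNIV_card_ge_0)
  then show ?thesis
    using True assms(2) by (simp add: card_nonzero of_nat_diff)
next
  case False
  have "(\<Sum>y\<in>UNIV. \<psi> (c * y)) = (\<Sum>x\<in>UNIV. \<psi> x)"
    by (rule sum.reindex_bij_witness[of _ "\<lambda>x. x / c" "\<lambda>y. c * y"]) (use False in auto)
  moreover have "(\<Sum>y\<in>UNIV. \<psi> (c * y)) = \<psi> 0 + (\<Sum>y\<in>{y. y \<noteq> 0}. \<psi> (c * y))"
    by (subst sum.remove[of _ 0]) (auto intro!: sum.cong)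
  ultimately show ?thesis
    using False assms sum_add_char[OF assms(1)] by (simp add: add_eq_0_iff)
qed

lemma gauss_triv_char:
  assumes "add_char \<psi>" "\<psi> 0 = 1"
  shows "gauss \<psi> triv_char = 1"
  using sum_add_char_nonzero_scaled[OF assms, of 1] by (simp add: gauss_def)

lemma gauss_mult_gauss_inverse_nontriv:
  fixes \<psi> \<chi> \<chi>' :: "'a::{finite,field} \<Rightarrow> complex"
  assumes \<psi>: "add_char \<psi>" "\<psi> 0 = 1"
    and \<chi>: "\<chi> \<in> mult_chars" "\<chi> \<noteq> triv_char"
    and inverse: "\<And>x. x \<noteq> 0 \<Longrightarrow> \<chi> x * \<chi>' x = 1"
  shows "gauss \<psi> \<chi> * gauss \<psi> \<chi>' = \<chi> (-1) * of_nat (card (UNIV :: 'a set))"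
proof -
  define S where "S = {x::'a. x \<noteq> 0}"
  define q :: complex where "q = of_nat (card (UNIV :: 'a set))"
  have substitute: "(\<Sum>x\<in>S. \<psi> x * \<chi> x * (\<psi> y * \<chi>' y)) = (\<Sum>t\<in>S. \<chi> t * \<psi> ((t + 1) * y))"
    if "y \<in> S" for y
  proof (rule sum.reindex_bij_witness[of _ "\<lambda>t. t * y" "\<lambda>x. x / y"])
    fix x assume "x \<in> S"
    have "\<chi> (x / y) = \<chi> x * \<chi>' y"
      using that \<chi>(1) inverse_unique[OF inverse[of y], symmetric]
      by (subst mult_chars_divide) (simp_all add: S_def divide_inverse)
    moreover have "(x / y + 1) * y = x + y"
      using that by (simp add: S_def field_simps)
    ultimately show "\<chi> (x / y) * \<psi> ((x / y + 1) * y) = \<psi> x * \<chi> x * (\<psi> y * \<chi>' y)"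
      by (simp add: add_char_add[OF \<psi>(1)] mult_ac)
  qed (use that in \<open>auto simp: S_def\<close>)
  have "gauss \<psi> \<chi> * gauss \<psi> \<chi>' = (\<Sum>x\<in>S. \<Sum>y\<in>S. \<psi> x * \<chi> x * (\<psi> y * \<chi>' y))"
    by (simp add: gauss_def S_def sum_product)
  also have "\<dots> = (\<Sum>y\<in>S. \<Sum>x\<in>S. \<psi> x * \<chi> x * (\<psi> y * \<chi>' y))"
    by (rule sum.swap)
  also have "\<dots> = (\<Sum>y\<in>S. \<Sum>t\<in>S. \<chi> t * \<psi> ((t + 1) * y))"
    by (rule sum.cong[OF refl]) (rule substitute)
  also have "\<dots> = (\<Sum>t\<in>S. \<chi> t * (\<Sum>y\<in>S. \<psi> ((t + 1) * y)))"
    by (subst sum.swap) (simp add: sum_distrib_left)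
  also have "\<dots> = (\<Sum>t\<in>S. \<chi> t * (if t = -1 then q - 1 else -1))"
    by (intro sum.cong refl)
      (simp add: S_def q_def sum_add_char_nonzero_scaled[OF \<psi>] eq_neg_iff_add_eq_0)
  also have "\<dots> = (\<Sum>t\<in>S. q * (if t = -1 then \<chi> t else 0) - \<chi> t)"
    by (intro sum.cong refl) (simp add: algebra_simps)
  also have "\<dots> = q * \<chi> (-1)"
    using sum_mult_chars_nontriv[OF \<chi>]
    by (simp add: S_def sum_subtractf sum.delta flip: sum_distrib_left)
  finally show ?thesis
    by (simp add: q_def)
qed

lemma gauss_mult_gauss_circ:
  fixes \<psi> \<chi> \<chi>' :: "'a::{finite,field} \<Rightarrow> complex"
  assumes \<psi>: "add_char \<psi>" "\<psi> 0 = 1"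
    and \<chi>: "\<chi> \<in> mult_chars" "\<chi>' \<in> mult_chars"
    and inverse: "\<And>x. x \<noteq> 0 \<Longrightarrow> \<chi> x * \<chi>' x = 1"
  shows "gauss \<psi> \<chi> * gauss_circ \<psi> \<chi>' = \<chi> (-1) * of_nat (card (UNIV :: 'a set))"
proof -
  have "\<chi> = triv_char \<longleftrightarrow> \<chi>' = triv_char"
    using inverse
    by (auto simp: mult_chars_eq_triv_char_iff[OF \<chi>(1)] mult_chars_eq_triv_char_iff[OF \<chi>(2)])
  then show ?thesis
    using gauss_mult_gauss_inverse_nontriv[OF \<psi> \<chi>(1) _ inverse] gauss_triv_char[OF \<psi>]
    by (cases "\<chi> = triv_char") (simp_all add: gauss_circ_def)
qed

lemma gauss_nonzero:
  fixes \<psi> \<chi> :: "'a::{finite,field} \<Rightarrow> complex"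
  assumes "add_char \<psi>" "\<psi> 0 = 1" "\<chi> \<in> mult_chars"
  shows "gauss \<psi> \<chi> \<noteq> 0"
  using gauss_mult_gauss_circ[OF assms char_inv_in_mult_chars[OF assms(3)]]
    mult_chars_minus_one_square[OF assms(3)] mult_chars_nonzero[OF assms(3)]
  by fastforce

lemma gauss_circ_nonzero:
  fixes \<psi> \<chi> :: "'a::{finite,field} \<Rightarrow> complex"
  assumes "add_char \<psi>" "\<psi> 0 = 1" "\<chi> \<in> mult_chars"
  shows "gauss_circ \<psi> \<chi> \<noteq> 0"
  using gauss_mult_gauss_circ[OF assms(1,2) char_inv_in_mult_chars[OF assms(3)] assms(3)]
    mult_chars_minus_one_square[OF assms(3)] mult_chars_nonzero[OF assms(3)]
  by fastforce

lemma gauss_circ_reflection: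
  fixes \<psi> \<chi> \<chi>' :: "'a::{finite,field} \<Rightarrow> complex"
  assumes \<psi>: "add_char \<psi>" "\<psi> 0 = 1"
    and \<chi>: "\<chi> \<in> mult_chars" "\<chi>' \<in> mult_chars"
    and inverse: "\<And>x. x \<noteq> 0 \<Longrightarrow> \<chi> x * \<chi>' x = 1"
  shows "gauss_circ \<psi> \<chi>' = \<chi> (-1) * of_nat (card (UNIV :: 'a set)) / gauss \<psi> \<chi>"
  using gauss_mult_gauss_circ[OF assms] gauss_nonzero[OF \<psi> \<chi>(1)] by (simp add: field_simps)

lemma poch_circ_reflection:
  fixes \<psi> \<gamma> \<gamma>' \<nu> \<chi> :: "'a::{finite,field} \<Rightarrow> complex"
  assumes \<psi>: "add_char \<psi>" "\<psi> 0 = 1"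
    and chars: "\<gamma> \<in> mult_chars" "\<gamma>' \<in> mult_chars" "\<nu> \<in> mult_chars" "\<chi> \<in> mult_chars"
    and inverse: "\<And>x. x \<noteq> 0 \<Longrightarrow> \<gamma> x * \<gamma>' x = 1" "\<And>x. x \<noteq> 0 \<Longrightarrow> \<gamma> x * \<nu> x * \<chi> x = 1"
  shows "poch_circ \<psi> \<gamma> \<nu> = \<nu> (-1) * gauss \<psi> \<gamma>' / gauss \<psi> \<chi>"
proof -
  have "gauss_circ \<psi> (char_mult \<gamma> \<nu>) = \<chi> (-1) * of_nat (card (UNIV :: 'a set)) / gauss \<psi> \<chi>"
    using chars inverse(2)
    by (intro gauss_circ_reflection[OF \<psi>, where \<chi> = \<chi>]) (simp_all add: mult_ac)
  moreover have "gauss_circ \<psi> \<gamma> = \<gamma>' (-1) * of_nat (card (UNIV :: 'a set)) / gauss \<psi> \<gamma>'"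
    using chars inverse(1)
    by (intro gauss_circ_reflection[OF \<psi>, where \<chi> = \<gamma>']) (simp_all add: mult_ac)
  moreover have "\<chi> (-1) = \<nu> (-1) * \<gamma>' (-1)"
  proof -
    have "\<gamma> (-1) * \<gamma>' (-1) = 1" "\<gamma> (-1) * \<nu> (-1) * \<chi> (-1) = 1"
      using inverse[of "-1"] by simp_all
    then show ?thesis
      using mult_chars_minus_one_square[OF chars(3)] by algebra
  qed
  ultimately show ?thesis
    using chars gauss_nonzero[OF \<psi>] gauss_circ_nonzero[OF \<psi> chars(1)]
      mult_chars_nonzero[OF chars(2), of "-1"]
    by (simp add: poch_circ_def field_simps)
qed

definition F4_summand ::
    "('a::{finite,field} \<Rightarrow> complex) \<Rightarrow> ('a \<Rightarrow> complex) \<Rightarrow> ('a \<Rightarrow> complex) \<Rightarrow> ('a \<Rightarrow> complex)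
      \<Rightarrow> ('a \<Rightarrow> complex) \<Rightarrow> 'a \<Rightarrow> 'a \<Rightarrow> ('a \<Rightarrow> complex) \<Rightarrow> ('a \<Rightarrow> complex) \<Rightarrow> complex" where
  "F4_summand \<psi> \<alpha> \<beta> \<gamma>1 \<gamma>2 x y \<nu>1 \<nu>2 =
     poch \<psi> \<alpha> (char_mult \<nu>1 \<nu>2) * poch \<psi> \<beta> (char_mult \<nu>1 \<nu>2) /
     (poch_circ \<psi> \<gamma>1 \<nu>1 * poch_circ \<psi> \<gamma>2 \<nu>2 *
      poch_circ \<psi> triv_char \<nu>1 * poch_circ \<psi> triv_char \<nu>2) * \<nu>1 x * \<nu>2 y"

lemma F4_eq_sum_F4_summand:
  fixes \<psi> :: "'a::{finite,field} \<Rightarrow> complex"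
  shows "F4 \<psi> \<alpha> \<beta> \<gamma>1 \<gamma>2 x y = 1 / (1 - of_nat (card (UNIV :: 'a set)))^2 *
     (\<Sum>\<nu>1\<in>mult_chars. \<Sum>\<nu>2\<in>mult_chars. F4_summand \<psi> \<alpha> \<beta> \<gamma>1 \<gamma>2 x y \<nu>1 \<nu>2)"
  unfolding F4_def F4_summand_def by (rule refl)

lemma sum_mult_chars_reflect:
  assumes "\<alpha> \<in> mult_chars"
  shows "(\<Sum>\<nu>\<in>mult_chars. f \<nu>) = (\<Sum>\<nu>\<in>mult_chars. f (char_inv (char_mult \<alpha> \<nu>)))"
proof -
  have involution: "char_inv (char_mult \<alpha> (char_inv (char_mult \<alpha> \<nu>))) = \<nu>"
    if "\<nu> \<in> mult_chars" for \<nu>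
    using assms that by (intro mult_chars_eqI) (simp_all add: mult_chars_nonzero)
  show ?thesis
    by (rule sum.reindex_bij_witness[of _ "\<lambda>\<nu>. char_inv (char_mult \<alpha> \<nu>)"
          "\<lambda>\<nu>. char_inv (char_mult \<alpha> \<nu>)"])
      (simp_all add: assms involution)
qed

lemma F4_summand_reflect:
  fixes \<psi> \<alpha> \<beta> \<gamma>1 \<gamma>2 \<nu>1 \<nu>2 :: "'a::{finite,field} \<Rightarrow> complex" and x y :: 'a
  assumes \<psi>: "add_char \<psi>" "\<psi> 0 = 1"
    and chars: "\<alpha> \<in> mult_chars" "\<beta> \<in> mult_chars" "\<gamma>1 \<in> mult_chars" "\<gamma>2 \<in> mult_chars"
      "\<nu>1 \<in> mult_chars" "\<nu>2 \<in> mult_chars"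
    and y: "y \<noteq> 0"
  shows "gauss \<psi> (char_mult (char_inv \<alpha>) \<beta>) * gauss \<psi> (char_mult \<alpha> (char_inv \<gamma>2))
      / (gauss \<psi> \<beta> * gauss \<psi> (char_inv \<gamma>2)) * char_inv \<alpha> y
      * F4_summand \<psi> \<alpha> (char_mult \<alpha> (char_inv \<gamma>2)) \<gamma>1 (char_mult \<alpha> (char_inv \<beta>)) (x / y) (1 / y)
          \<nu>1 (char_inv (char_mult (char_mult \<alpha> \<nu>1) \<nu>2))
    = F4_summand \<psi> \<alpha> \<beta> \<gamma>1 \<gamma>2 x y \<nu>1 \<nu>2"
proof -
  define \<mu> where "\<mu> = char_inv (char_mult (char_mult \<alpha> \<nu>1) \<nu>2)"
  have \<mu>: "\<mu> \<in> mult_chars"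
    using chars by (simp add: \<mu>_def)
  note nonzero = mult_chars_nonzero[OF chars(1)] mult_chars_nonzero[OF chars(2)]
    mult_chars_nonzero[OF chars(4)] mult_chars_nonzero[OF chars(5)] mult_chars_nonzero[OF chars(6)]
  have reflections: "poch_circ \<psi> \<gamma>2 \<nu>2 = \<nu>2 (-1) * gauss \<psi> (char_inv \<gamma>2)
      / gauss \<psi> (char_mult (char_mult \<alpha> (char_inv \<gamma>2)) (char_mult \<nu>1 \<mu>))"
    "poch_circ \<psi> triv_char \<nu>2
      = \<nu>2 (-1) * gauss \<psi> triv_char / gauss \<psi> (char_mult \<alpha> (char_mult \<nu>1 \<mu>))"
    "poch_circ \<psi> (char_mult \<alpha> (char_inv \<beta>)) \<mu> = \<mu> (-1) * gauss \<psi> (char_mult (char_inv \<alpha>) \<beta>)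
      / gauss \<psi> (char_mult \<beta> (char_mult \<nu>1 \<nu>2))"
    "poch_circ \<psi> triv_char \<mu>
      = \<mu> (-1) * gauss \<psi> triv_char / gauss \<psi> (char_mult \<alpha> (char_mult \<nu>1 \<nu>2))"
    using chars \<mu> nonzero by (intro poch_circ_reflection[OF \<psi>]; simp add: \<mu>_def field_simps)+
  have \<mu>_at_inverse: "\<mu> (1 / y) = \<alpha> y * \<nu>1 y * \<nu>2 y"
    using chars y nonzero by (simp add: \<mu>_def mult_chars_divide)
  have sign_cancel: "\<chi> (-1) * (\<chi> (-1) * z) = z"
    if "\<chi> \<in> mult_chars" for \<chi> :: "'a \<Rightarrow> complex" and z
    using mult_chars_minus_one_square[OF that] by (metis mult.assoc mult_1)
  show ?thesis
    unfolding \<mu>_def[symmetric] F4_summand_def poch_def reflections gauss_triv_char[OF \<psi>]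
    using chars y nonzero gauss_nonzero[OF \<psi>] gauss_circ_nonzero[OF \<psi>]
    by (simp add: \<mu>_at_inverse mult_chars_divide field_simps sign_cancel \<mu>)
qed

theorem proposition3p17:
  fixes \<psi> \<alpha> \<beta> \<gamma>1 \<gamma>2 :: "'a::{finite,field} \<Rightarrow> complex" and x y :: 'a
  assumes "add_char \<psi>"
    and "\<alpha> \<in> mult_chars" and "\<beta> \<in> mult_chars" and "\<gamma>1 \<in> mult_chars" and "\<gamma>2 \<in> mult_chars"
    and "\<alpha> \<noteq> triv_char"
    and "char_mult (char_mult (char_inv \<beta>) \<gamma>1) \<gamma>2 \<noteq> triv_char"
    and "y \<noteq> 0"
  shows "F4 \<psi> \<alpha> \<beta> \<gamma>1 \<gamma>2 x y =
    gauss \<psi> (char_mult (char_inv \<alpha>) \<beta>) * gauss \<psi> (char_mult \<alpha> (char_inv \<gamma>2))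
      / (gauss \<psi> \<beta> * gauss \<psi> (char_inv \<gamma>2))
    * char_inv \<alpha> y
    * F4 \<psi> \<alpha> (char_mult \<alpha> (char_inv \<gamma>2)) \<gamma>1 (char_mult \<alpha> (char_inv \<beta>)) (x / y) (1 / y)"
proof (cases "\<psi> 0 = 1")
  case False
  \<comment> \<open>\<open>add_char\<close> admits \<open>\<psi> = 0\<close>; then every Gauss sum and every Pochhammer symbol is \<open>0\<close>.\<close>
  then have "\<psi> = (\<lambda>_. 0)"
    using add_char_zero_cases[OF assms(1)] by blast
  then show ?thesis
    by (simp add: F4_eq_sum_F4_summand F4_summand_def poch_def gauss_def)
next
  case True
  let ?C = "gauss \<psi> (char_mult (char_inv \<alpha>) \<beta>) * gauss \<psi> (char_mult \<alpha> (char_inv \<gamma>2))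
      / (gauss \<psi> \<beta> * gauss \<psi> (char_inv \<gamma>2)) * char_inv \<alpha> y"
  let ?K = "1 / (1 - of_nat (card (UNIV :: 'a set)))^2 :: complex"
  let ?S = "F4_summand \<psi> \<alpha> (char_mult \<alpha> (char_inv \<gamma>2)) \<gamma>1 (char_mult \<alpha> (char_inv \<beta>)) (x / y) (1 / y)"
  have "?C * F4 \<psi> \<alpha> (char_mult \<alpha> (char_inv \<gamma>2)) \<gamma>1 (char_mult \<alpha> (char_inv \<beta>)) (x / y) (1 / y)
      = ?K * (\<Sum>\<nu>1\<in>mult_chars. \<Sum>\<nu>2\<in>mult_chars. ?C * ?S \<nu>1 \<nu>2)"
    by (simp add: F4_eq_sum_F4_summand sum_distrib_left mult_ac)
  also have "\<dots> = ?K * (\<Sum>\<nu>1\<in>mult_chars. \<Sum>\<nu>2\<in>mult_chars.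
      ?C * ?S \<nu>1 (char_inv (char_mult (char_mult \<alpha> \<nu>1) \<nu>2)))"
    using assms(2) by (intro arg_cong[where f = "\<lambda>s. ?K * s"] sum.cong refl sum_mult_chars_reflect) simp
  also have "\<dots> = ?K * (\<Sum>\<nu>1\<in>mult_chars. \<Sum>\<nu>2\<in>mult_chars. F4_summand \<psi> \<alpha> \<beta> \<gamma>1 \<gamma>2 x y \<nu>1 \<nu>2)"
    using F4_summand_reflect[OF assms(1) True assms(2-5) _ _ assms(8)] by simp
  finally show ?thesis
    by (simp add: F4_eq_sum_F4_summand)
qed

end
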